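(* Let $K_{23}-K_5$ denote the graph with vertex set $\mathbb{Z}_{18}\cup\{a,b,c,d,e\}$ containing all edges except the ten edges among $a,b,c,d,e$. Consider the cyclic sequences $$L_0=(10, 16, a, 2, b, 4, c, 8, d, 7, e, 17, 14, 3, 9, 12, 13, 5, 1, 6, 15, 11),$$ $$L_1=(8, 1, a, 2, 12, 9, 3, 7, c, 14, b, 13, e, 11, d, 16, 10, 5, 17, 4, 15, 6),$$ $$L_2=(16, a, 17, 7, 4, 3, 12, 2, d, 10, c, 11, 14, 13, 8, 6, 9, 15, 1, e, 5, b).$$ For $\gamma\in\mathbb{Z}_{18}$, let the rotation at $\gamma$ be obtained from $L_{\gamma\bmod 3}$ by adding $\gamma$ (mod 18) to every numerical entry, leaving letters unchanged. Then there exist rotations at $a,b,c,d,e$ such that the resulting rotation system is a triangular embedding of $K_{23}-K_5$ in the orientable surface $S_{30}$ of genus $30$.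
   Context: A rotation system on a simple graph assigns to each vertex a cyclic ordering of its neighbors and determines a cellular orientable embedding. An embedding is triangular if every face is a triangle. $S_k$ denotes the orientable surface of genus $k$. *)

theory Defs
  imports Main
begin

definition simple_graph :: "'v set \<Rightarrow> ('v \<Rightarrow> 'v \<Rightarrow> bool) \<Rightarrow> bool" where
  "simple_graph V Adj \<longleftrightarrow> finite V \<and> (\<forall>u v. Adj u v \<longrightarrow> u \<in> V \<and> v \<in> V \<and> u \<noteq> v \<and> Adj v u)"

definition neighbors :: "('v \<Rightarrow> 'v \<Rightarrow> bool) \<Rightarrow> 'v \<Rightarrow> 'v set" where
  "neighbors Adj v = {u. Adj v u}"

text \<open>A rotation system: at each vertex a cyclic ordering (given by a list,
read cyclically) of its neighbours, each neighbour exactly once.\<close>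

definition rotation_system :: "'v set \<Rightarrow> ('v \<Rightarrow> 'v \<Rightarrow> bool) \<Rightarrow> ('v \<Rightarrow> 'v list) \<Rightarrow> bool" where
  "rotation_system V Adj rot \<longleftrightarrow>
     (\<forall>v\<in>V. distinct (rot v) \<and> set (rot v) = neighbors Adj v)"

definition rot_succ :: "('v \<Rightarrow> 'v list) \<Rightarrow> 'v \<Rightarrow> 'v \<Rightarrow> 'v" where
  "rot_succ rot v u =
     (THE w. \<exists>i < length (rot v). rot v ! i = u \<and> w = rot v ! ((i + 1) mod length (rot v)))"

definition darts :: "('v \<Rightarrow> 'v \<Rightarrow> bool) \<Rightarrow> ('v \<times> 'v) set" where
  "darts Adj = {(u, v). Adj u v}"

definition face_step :: "('v \<Rightarrow> 'v list) \<Rightarrow> 'v \<times> 'v \<Rightarrow> 'v \<times> 'v" where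
  "face_step rot d = (snd d, rot_succ rot (snd d) (fst d))"

definition face_of :: "('v \<Rightarrow> 'v list) \<Rightarrow> 'v \<times> 'v \<Rightarrow> ('v \<times> 'v) set" where
  "face_of rot d = {(face_step rot ^^ n) d | n. True}"

definition faces :: "('v \<Rightarrow> 'v \<Rightarrow> bool) \<Rightarrow> ('v \<Rightarrow> 'v list) \<Rightarrow> ('v \<times> 'v) set set" where
  "faces Adj rot = face_of rot ` darts Adj"

definition edges :: "('v \<Rightarrow> 'v \<Rightarrow> bool) \<Rightarrow> 'v set set" where
  "edges Adj = {{u, v} | u v. Adj u v}"

definition triangular :: "('v \<Rightarrow> 'v \<Rightarrow> bool) \<Rightarrow> ('v \<Rightarrow> 'v list) \<Rightarrow> bool" where
  "triangular Adj rot \<longleftrightarrow> (\<forall>f \<in> faces Adj rot. card f = 3)"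

text \<open>The cellular orientable embedding determined by the rotation system
lies in S_k iff V - E + F = 2 - 2k (Euler's formula).\<close>

definition embedding_genus_is :: "'v set \<Rightarrow> ('v \<Rightarrow> 'v \<Rightarrow> bool) \<Rightarrow> ('v \<Rightarrow> 'v list) \<Rightarrow> nat \<Rightarrow> bool" where
  "embedding_genus_is V Adj rot k \<longleftrightarrow>
     int (card V) - int (card (edges Adj)) + int (card (faces Adj rot)) = 2 - 2 * int k"

datatype vtx = N nat | Va | Vb | Vc | Vd | Ve

definition is_letter :: "vtx \<Rightarrow> bool" where
  "is_letter x \<longleftrightarrow> x \<in> {Va, Vb, Vc, Vd, Ve}"

definition V23 :: "vtx set" where
  "V23 = {N i | i. i < 18} \<union> {Va, Vb, Vc, Vd, Ve}"

definition Adj23 :: "vtx \<Rightarrow> vtx \<Rightarrow> bool" where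
  "Adj23 u v \<longleftrightarrow> u \<in> V23 \<and> v \<in> V23 \<and> u \<noteq> v \<and> \<not> (is_letter u \<and> is_letter v)"

fun shift :: "nat \<Rightarrow> vtx \<Rightarrow> vtx" where
  "shift g (N i) = N ((i + g) mod 18)"
| "shift g x = x"

definition L0 :: "vtx list" where
  "L0 = [N 10, N 16, Va, N 2, Vb, N 4, Vc, N 8, Vd, N 7, Ve, N 17, N 14, N 3, N 9, N 12, N 13, N 5, N 1, N 6, N 15, N 11]"

definition L1 :: "vtx list" where
  "L1 = [N 8, N 1, Va, N 2, N 12, N 9, N 3, N 7, Vc, N 14, Vb, N 13, Ve, N 11, Vd, N 16, N 10, N 5, N 17, N 4, N 15, N 6]"

definition L2 :: "vtx list" where
  "L2 = [N 16, Va, N 17, N 7, N 4, N 3, N 12, N 2, Vd, N 10, Vc, N 11, N 14, N 13, N 8, N 6, N 9, N 15, N 1, Ve, N 5, Vb]"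

definition Lrow :: "nat \<Rightarrow> vtx list" where
  "Lrow r = (if r = 0 then L0 else if r = 1 then L1 else L2)"

end

theory Submission
  imports Defs
begin

text \<open>The rotations at the five letters are forced by the numeric ones: for the face through
the dart (x, u) to be a triangle, whenever w follows the letter x in the rotation at u, the
vertex u must follow w in the rotation at x. With the rotations so obtained, every dart traces
a triangle, which is a finite check over the 486 darts. Euler's formula then gives the genus: there are
23 vertices, 243 edges and 2 \<cdot> 243 / 3 = 162 faces, so 2 - 2g = -58 and g = 30.\<close>

fun list_index :: "'a \<Rightarrow> 'a list \<Rightarrow> nat" where
  "list_index x [] = 0"
| "list_index x (y # ys) = (if x = y then 0 else Suc (list_index x ys))"

lemma list_index_in_set:
  "x \<in> set xs \<Longrightarrow> list_index x xs < length xs \<and> xs ! list_index x xs = x"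
  by (induction xs) auto

definition cyclic_succ :: "'a list \<Rightarrow> 'a \<Rightarrow> 'a" where
  "cyclic_succ xs u = xs ! ((list_index u xs + 1) mod length xs)"

lemma cyclic_succ_in_set: "xs \<noteq> [] \<Longrightarrow> cyclic_succ xs u \<in> set xs"
  unfolding cyclic_succ_def by simp

lemma rot_succ_eq_cyclic_succ:
  assumes "distinct (rot v)" "u \<in> set (rot v)"
  shows "rot_succ rot v u = cyclic_succ (rot v) u"
  unfolding rot_succ_def cyclic_succ_def
proof (rule the_equality)
  let ?i = "list_index u (rot v)"
  have i: "?i < length (rot v)" "rot v ! ?i = u"
    using list_index_in_set[OF assms(2)] by auto
  then show "\<exists>j<length (rot v). rot v ! j = u \<and>
      rot v ! ((?i + 1) mod length (rot v)) = rot v ! ((j + 1) mod length (rot v))"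
    by blast
  fix w assume "\<exists>j<length (rot v). rot v ! j = u \<and> w = rot v ! ((j + 1) mod length (rot v))"
  then obtain j where j: "j < length (rot v)" "rot v ! j = u" "w = rot v ! ((j + 1) mod length (rot v))"
    by blast
  have "j = ?i" using i j assms(1) nth_eq_iff_index_eq by metis
  with j show "w = rot v ! ((?i + 1) mod length (rot v))" by simp
qed

definition cyclic_face_step :: "('v \<Rightarrow> 'v list) \<Rightarrow> 'v \<times> 'v \<Rightarrow> 'v \<times> 'v" where
  "cyclic_face_step rot d = (snd d, cyclic_succ (rot (snd d)) (fst d))"

definition traces_triangle :: "('a \<Rightarrow> 'a) \<Rightarrow> 'a \<Rightarrow> bool" where
  "traces_triangle f d \<longleftrightarrow> f (f (f d)) = d \<and> f d \<noteq> d"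

lemma orbit_of_period_3:
  assumes "f (f (f d)) = d"
  shows "{(f ^^ n) d | n. True} = {d, f d, f (f d)}"
proof (intro equalityI subsetI)
  fix x assume "x \<in> {(f ^^ n) d | n. True}"
  then obtain n where "x = (f ^^ n) d" by blast
  moreover have "(f ^^ 3) d = d" using assms by (simp add: numeral_3_eq_3)
  ultimately have "x = (f ^^ (n mod 3)) d" by (simp add: funpow_mod_eq)
  moreover have "n mod 3 = 0 \<or> n mod 3 = 1 \<or> n mod 3 = 2" by auto
  ultimately show "x \<in> {d, f d, f (f d)}" by (auto simp: numeral_2_eq_2)
next
  fix x assume "x \<in> {d, f d, f (f d)}"
  then have "x = (f ^^ 0) d \<or> x = (f ^^ 1) d \<or> x = (f ^^ 2) d" by (auto simp: numeral_2_eq_2)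
  then show "x \<in> {(f ^^ n) d | n. True}" by blast
qed

lemma card_triangle:
  assumes "traces_triangle f d"
  shows "card {d, f d, f (f d)} = 3"
proof -
  have "f (f d) \<noteq> d" "f (f d) \<noteq> f d"
    using assms unfolding traces_triangle_def by metis+
  then show ?thesis using assms unfolding traces_triangle_def by (auto simp: card_insert_if)
qed

lemma triangle_of_member:
  assumes "f (f (f d)) = d" "x \<in> {d, f d, f (f d)}"
  shows "{x, f x, f (f x)} = {d, f d, f (f d)}"
  using assms by auto

context
  fixes V :: "'v set" and Adj :: "'v \<Rightarrow> 'v \<Rightarrow> bool"
  assumes graph: "simple_graph V Adj"
begin

lemma finite_darts: "finite (darts Adj)"
proof (rule finite_subset)
  show "darts Adj \<subseteq> V \<times> V" using graph unfolding simple_graph_def darts_def by auto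
  show "finite (V \<times> V)" using graph unfolding simple_graph_def by simp
qed

lemma card_darts_eq_twice_card_edges: "card (darts Adj) = 2 * card (edges Adj)"
proof -
  let ?ends = "\<lambda>e. {(u, v). Adj u v \<and> {u, v} = e}"
  have ends: "?ends e = {(u, v), (v, u)}" if "Adj u v" "e = {u, v}" for u v e
    using that graph unfolding simple_graph_def by (auto simp: doubleton_eq_iff)
  have "darts Adj = (\<Union>e\<in>edges Adj. ?ends e)"
    unfolding darts_def edges_def by blast
  also have "card \<dots> = (\<Sum>e\<in>edges Adj. card (?ends e))"
  proof (rule card_UN_disjoint)
    have "edges Adj = (\<lambda>(u, v). {u, v}) ` darts Adj"
      unfolding edges_def darts_def by auto
    then show "finite (edges Adj)" using finite_darts by simp
  qed (use finite_darts in \<open>auto simp: darts_def intro: rev_finite_subset\<close>)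
  also have "\<dots> = (\<Sum>e\<in>edges Adj. 2)"
  proof (rule sum.cong)
    fix e assume "e \<in> edges Adj"
    then obtain u v where "Adj u v" "e = {u, v}" unfolding edges_def by blast
    moreover have "u \<noteq> v" using \<open>Adj u v\<close> graph unfolding simple_graph_def by blast
    ultimately show "card (?ends e) = 2" using ends by simp
  qed simp
  finally show ?thesis by simp
qed

context
  fixes rot :: "'v \<Rightarrow> 'v list"
  assumes rotation: "rotation_system V Adj rot"
begin

lemma face_step_eq_cyclic_face_step:
  assumes "d \<in> darts Adj"
  shows "face_step rot d = cyclic_face_step rot d"
    and "face_step rot d \<in> darts Adj"
proof -
  obtain u v where d: "d = (u, v)" "Adj u v" using assms unfolding darts_def by blast
  have "v \<in> V" "Adj v u" using d(2) graph unfolding simple_graph_def by blast+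
  then have rot_v: "distinct (rot v)" "set (rot v) = neighbors Adj v" "u \<in> set (rot v)"
    using rotation unfolding rotation_system_def neighbors_def by auto
  then show "face_step rot d = cyclic_face_step rot d"
    unfolding face_step_def cyclic_face_step_def d by (simp add: rot_succ_eq_cyclic_succ)
  have "cyclic_succ (rot v) u \<in> neighbors Adj v"
    using cyclic_succ_in_set rot_v by (metis empty_iff list.set(1))
  then show "face_step rot d \<in> darts Adj"
    unfolding face_step_def darts_def neighbors_def d
    by (simp add: rot_succ_eq_cyclic_succ[of rot v u, OF rot_v(1,3)])
qed

lemma card_darts_eq_sum_length: "card (darts Adj) = (\<Sum>v\<in>V. length (rot v))"
proof -
  have "darts Adj = Sigma V (neighbors Adj)"
    using graph unfolding simple_graph_def darts_def neighbors_def by auto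
  moreover have "card (neighbors Adj v) = length (rot v)" if "v \<in> V" for v
    using rotation that unfolding rotation_system_def by (metis distinct_card)
  moreover have "finite (neighbors Adj v)" if "v \<in> V" for v
    using rotation that unfolding rotation_system_def by (metis finite_set)
  ultimately show ?thesis using graph unfolding simple_graph_def by simp
qed

lemma triangular_if_darts_trace_triangles:
  assumes "\<forall>d\<in>darts Adj. traces_triangle (cyclic_face_step rot) d"
  shows "triangular Adj rot" and "card (darts Adj) = 3 * card (faces Adj rot)"
proof -
  let ?f = "face_step rot"
  have triangle: "traces_triangle ?f d" and in_darts: "face_of rot d \<subseteq> darts Adj"
    and face: "face_of rot d = {d, ?f d, ?f (?f d)}" if "d \<in> darts Adj" for d
  proof -
    have "?f d \<in> darts Adj" "?f (?f d) \<in> darts Adj"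
      using face_step_eq_cyclic_face_step(2) that by blast+
    then show "traces_triangle ?f d"
      using assms that face_step_eq_cyclic_face_step(1) by (simp add: traces_triangle_def)
    then show face: "face_of rot d = {d, ?f d, ?f (?f d)}"
      unfolding face_of_def traces_triangle_def using orbit_of_period_3[of ?f d] by simp
    show "face_of rot d \<subseteq> darts Adj"
      using face that face_step_eq_cyclic_face_step(2) by auto
  qed
  have card3: "\<forall>F\<in>faces Adj rot. card F = 3"
  proof
    fix F assume "F \<in> faces Adj rot"
    then obtain d where "d \<in> darts Adj" "F = face_of rot d" unfolding faces_def by blast
    then show "card F = 3"
      using triangle[of d] face[of d] card_triangle by simp
  qed
  then show "triangular Adj rot" unfolding triangular_def .
  have union: "\<Union>(faces Adj rot) = darts Adj"
    unfolding faces_def using in_darts face by blast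
  have disjoint: "\<forall>F1\<in>faces Adj rot. \<forall>F2\<in>faces Adj rot. F1 \<noteq> F2 \<longrightarrow> F1 \<inter> F2 = {}"
  proof (intro ballI impI)
    fix F1 F2 assume "F1 \<in> faces Adj rot" "F2 \<in> faces Adj rot" "F1 \<noteq> F2"
    then obtain d1 d2 where "d1 \<in> darts Adj" "d2 \<in> darts Adj"
      and F: "F1 = face_of rot d1" "F2 = face_of rot d2" unfolding faces_def by blast
    then show "F1 \<inter> F2 = {}"
      using \<open>F1 \<noteq> F2\<close> face triangle_of_member triangle
      unfolding F traces_triangle_def by (metis disjoint_iff)
  qed
  have "finite (faces Adj rot)" unfolding faces_def using finite_darts by simp
  then have "3 * card (faces Adj rot) = card (\<Union>(faces Adj rot))"
    using card_partition[of "faces Adj rot" 3] card3 disjoint union finite_darts by simp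
  with union show "card (darts Adj) = 3 * card (faces Adj rot)" by simp
qed

end

end

definition vertex_list :: "vtx list" where
  "vertex_list = map N [0..<18] @ [Va, Vb, Vc, Vd, Ve]"

definition dart_list :: "(vtx \<times> vtx) list" where
  "dart_list = [(u, v). u \<leftarrow> vertex_list, v \<leftarrow> vertex_list, u \<noteq> v \<and> \<not> (is_letter u \<and> is_letter v)]"

lemma V23_eq_set: "V23 = set vertex_list"
  unfolding V23_def vertex_list_def by auto

lemma Adj23_iff:
  "Adj23 u v \<longleftrightarrow> u \<in> set vertex_list \<and> v \<in> set vertex_list \<and> u \<noteq> v \<and> \<not> (is_letter u \<and> is_letter v)"
  unfolding Adj23_def V23_eq_set by blast

lemma simple_graph_Adj23: "simple_graph V23 Adj23"
  unfolding simple_graph_def V23_eq_set Adj23_iff by auto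

lemma darts_Adj23: "darts Adj23 = set dart_list"
  unfolding darts_def dart_list_def Adj23_iff by auto

fun rot23 :: "vtx \<Rightarrow> vtx list" where
  "rot23 (N i) = map (shift i) (Lrow (i mod 3))"
| "rot23 Va = map N [0, 16, 17, 15, 13, 14, 12, 10, 11, 9, 7, 8, 6, 4, 5, 3, 1, 2]"
| "rot23 Vb = map N [0, 2, 7, 3, 5, 10, 6, 8, 13, 9, 11, 16, 12, 14, 1, 15, 17, 4]"
| "rot23 Vc = map N [0, 4, 11, 3, 7, 14, 6, 10, 17, 9, 13, 2, 12, 16, 5, 15, 1, 8]"
| "rot23 Vd = map N [0, 8, 10, 3, 11, 13, 6, 14, 16, 9, 17, 1, 12, 2, 4, 15, 5, 7]"
| "rot23 Ve = map N [0, 7, 2, 3, 10, 5, 6, 13, 8, 9, 16, 11, 12, 1, 14, 15, 4, 17]"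

lemma rotation_system_rot23: "rotation_system V23 Adj23 rot23"
proof -
  have "list_all (\<lambda>v. distinct (rot23 v) \<and>
      set (rot23 v) = set [u \<leftarrow> vertex_list. v \<noteq> u \<and> \<not> (is_letter v \<and> is_letter u)]) vertex_list"
    by code_simp
  then show ?thesis
    unfolding rotation_system_def neighbors_def V23_eq_set Adj23_iff list_all_iff by auto
qed

lemma darts_Adj23_trace_triangles:
  "\<forall>d\<in>darts Adj23. traces_triangle (cyclic_face_step rot23) d"
proof -
  have "list_all (traces_triangle (cyclic_face_step rot23)) dart_list" by code_simp
  then show ?thesis unfolding darts_Adj23 list_all_iff .
qed

lemma distinct_vertex_list: "distinct vertex_list"
  unfolding vertex_list_def by (auto simp: distinct_map inj_on_def)

lemma card_darts_Adj23: "card (darts Adj23) = 486"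
proof -
  have "card (darts Adj23) = (\<Sum>v\<in>set vertex_list. length (rot23 v))"
    using card_darts_eq_sum_length[OF simple_graph_Adj23 rotation_system_rot23]
    by (simp add: V23_eq_set)
  also have "\<dots> = sum_list (map (\<lambda>v. length (rot23 v)) vertex_list)"
    by (simp add: sum_list_distinct_conv_sum_set[OF distinct_vertex_list])
  also have "\<dots> = 486" by code_simp
  finally show ?thesis .
qed

lemma card_V23: "card V23 = 23"
  unfolding V23_eq_set distinct_card[OF distinct_vertex_list] by (simp add: vertex_list_def)

theorem mainTheorem5:
  shows "\<exists>rot :: vtx \<Rightarrow> vtx list.
           (\<forall>g < 18. rot (N g) = map (shift g) (Lrow (g mod 3))) \<and>
           rotation_system V23 Adj23 rot \<and>
           triangular Adj23 rot \<and>
           embedding_genus_is V23 Adj23 rot 30"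
proof (intro exI conjI)
  show "\<forall>g < 18. rot23 (N g) = map (shift g) (Lrow (g mod 3))" by simp
  show rotation: "rotation_system V23 Adj23 rot23" by (rule rotation_system_rot23)
  note triangles = triangular_if_darts_trace_triangles[OF simple_graph_Adj23 rotation
      darts_Adj23_trace_triangles]
  show "triangular Adj23 rot23" by (rule triangles(1))
  have "card (faces Adj23 rot23) = 162" using triangles(2) card_darts_Adj23 by simp
  moreover have "card (edges Adj23) = 243"
    using card_darts_eq_twice_card_edges[OF simple_graph_Adj23] card_darts_Adj23 by simp
  ultimately show "embedding_genus_is V23 Adj23 rot23 30"
    unfolding embedding_genus_is_def using card_V23 by simp
qed

end
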